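(* Let $T$ be a unital completely positive map on $M_n(\mathbb{C})$ written as $T(x)=\sum_{i=1}^d a_ixa_i^*$ ($x\in M_n(\mathbb{C})$) for some $d\in\mathbb{N}$ and $a_i\in M_n(\mathbb{C})$. (1) If $a_i^t=a_i$ for all $1\leq i\leq d$, then $F(T)=W_n^+$. (2) If $a_i^t=-a_i$ for all $1\leq i\leq d$, then $F(T)=W_n^-$.
   Context: Here $n\geq 2$ and $a^t$ denotes the transpose. For $u\in\mathcal{U}(n)$ let $\rho_u(T)=\mathrm{ad}(u)\,T\,\mathrm{ad}(u^t)$ with $\mathrm{ad}(v)(x)=vxv^*$; the twirling map is $F(T)=\int_{\mathcal{U}(n)}\rho_u(T)\,du$ (Haar probability measure). The Holevo–Werner channels are $W_n^+(x)=\frac{1}{n+1}(\mathrm{Tr}_n(x)1_n+x^t)$ and $W_n^-(x)=\frac{1}{n-1}(\mathrm{Tr}_n(x)1_n-x^t)$, $\mathrm{Tr}_n$ the non-normalized trace. *)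

theory Defs
  imports "HOL-Analysis.Analysis" "HOL-Probability.Probability_Measure"
begin

text \<open>n x n complex matrices are modelled as complex^'n^'n, with n = CARD('n).\<close>

definition cadj :: "complex^'n^'n \<Rightarrow> complex^'n^'n" where
  "cadj A = (\<chi> i j. cnj (A $ j $ i))"

definition unitary_mat :: "complex^'n^'n \<Rightarrow> bool" where
  "unitary_mat u \<longleftrightarrow> u ** cadj u = mat 1 \<and> cadj u ** u = mat 1"

definition mtrace :: "complex^'n^'n \<Rightarrow> complex" where
  "mtrace A = (\<Sum>i\<in>UNIV. A $ i $ i)"

definition ad :: "complex^'n^'n \<Rightarrow> complex^'n^'n \<Rightarrow> complex^'n^'n" where
  "ad v x = v ** x ** cadj v"

text \<open>Haar probability measure on the unitary group U(n), viewed as a Borel probability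
  measure on the space of all n x n complex matrices concentrated on U(n) and invariant
  under left multiplication by unitaries.  (It exists and is unique.)\<close>
definition haar_unitary :: "(complex^'n^'n) measure \<Rightarrow> bool" where
  "haar_unitary \<mu> \<longleftrightarrow> prob_space \<mu> \<and> sets \<mu> = sets borel \<and>
     (AE u in \<mu>. unitary_mat u) \<and>
     (\<forall>v. unitary_mat v \<longrightarrow> distr \<mu> borel (\<lambda>u. v ** u) = \<mu>)"

definition twirl :: "(complex^'n^'n) measure \<Rightarrow> (complex^'n^'n \<Rightarrow> complex^'n^'n)
    \<Rightarrow> complex^'n^'n \<Rightarrow> complex^'n^'n" where
  "twirl \<mu> T x = integral\<^sup>L \<mu> (\<lambda>u. (ad u \<circ> T \<circ> ad (transpose u)) x)"

definition W_plus :: "complex^'n^'n \<Rightarrow> complex^'n^'n" where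
  "W_plus x = (1 / (real CARD('n) + 1)) *\<^sub>R (mat (mtrace x) + transpose x)"

definition W_minus :: "complex^'n^'n \<Rightarrow> complex^'n^'n" where
  "W_minus x = (1 / (real CARD('n) - 1)) *\<^sub>R (mat (mtrace x) - transpose x)"

end

theory Submission
  imports Defs
begin

text \<open>By left invariance of the Haar measure the twirl \<open>F(T)\<close> is covariant:
  \<open>ad v \<circ> F(T) \<circ> ad (v\<^sup>t) = F(T)\<close> for every unitary \<open>v\<close>. Covariance under diagonal phase
  unitaries kills every Choi coefficient \<open>F(T)(E\<^sub>j\<^sub>k)\<^sub>p\<^sub>q\<close> except those with \<open>j = k, p = q\<close> or
  \<open>j = q, k = p\<close>, and covariance under a Hadamard rotation in the \<open>(j,k)\<close>-plane relates the
  survivors. Conjugation \<open>a \<mapsto> u a u\<^sup>t\<close> preserves \<open>a\<^sup>t = \<plusminus>a\<close>, so the Choi coefficients of \<open>F(T)\<close>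
  inherit the symmetry \<open>F(T)(E\<^sub>j\<^sub>k)\<^sub>p\<^sub>q = \<plusminus>F(T)(E\<^sub>p\<^sub>k)\<^sub>j\<^sub>q\<close>, and unitality fixes the remaining
  scale: \<open>F(T)(x) = (tr(x) 1 \<plusminus> x\<^sup>t) / (n \<plusminus> 1)\<close>.\<close>

subsection \<open>Matrix calculus\<close>

lemma matrix_mult_nth: "(A ** B) $ i $ j = (\<Sum>k\<in>UNIV. A $ i $ k * B $ k $ j)"
  by (simp add: matrix_matrix_mult_def)

lemma transpose_nth [simp]: "transpose A $ i $ j = A $ j $ i"
  by (simp add: transpose_def)

lemma mat_nth: "mat c $ i $ j = (if i = j then c else 0)"
  by (simp add: mat_def)

lemma matrix_mult_triple_nth:
  "(A ** X ** C) $ p $ q = (\<Sum>r\<in>UNIV. \<Sum>s\<in>UNIV. A $ p $ r * X $ r $ s * C $ s $ q)"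
proof -
  have "(A ** X ** C) $ p $ q = (\<Sum>s\<in>UNIV. (\<Sum>r\<in>UNIV. A $ p $ r * X $ r $ s) * C $ s $ q)"
    by (simp add: matrix_mult_nth)
  also have "\<dots> = (\<Sum>s\<in>UNIV. \<Sum>r\<in>UNIV. A $ p $ r * X $ r $ s * C $ s $ q)"
    by (simp add: sum_distrib_right)
  also have "\<dots> = (\<Sum>r\<in>UNIV. \<Sum>s\<in>UNIV. A $ p $ r * X $ r $ s * C $ s $ q)"
    by (rule sum.swap)
  finally show ?thesis .
qed

lemma matrix_add_rdistrib: "(A + B) ** C = A ** C + B ** C"
  by (simp add: vec_eq_iff matrix_mult_nth distrib_right sum.distrib)

lemma matrix_mult_sum_right: "A ** sum F I = (\<Sum>i\<in>I. A ** F i)"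
  by (induction I rule: infinite_finite_induct) (simp_all add: matrix_add_ldistrib)

lemma matrix_mult_sum_left: "sum F I ** A = (\<Sum>i\<in>I. F i ** A)"
  by (induction I rule: infinite_finite_induct) (simp_all add: matrix_add_rdistrib)

lemma cadj_nth [simp]: "cadj A $ i $ j = cnj (A $ j $ i)"
  by (simp add: cadj_def)

lemma cadj_mult: "cadj (A ** B) = cadj B ** cadj A"
  by (simp add: vec_eq_iff matrix_mult_nth mult.commute)

lemma cadj_transpose: "cadj (transpose A) = transpose (cadj A)"
  by (simp add: vec_eq_iff)

lemma ad_mult: "ad (u ** v) x = ad u (ad v x)"
  by (simp add: ad_def cadj_mult matrix_mul_assoc)

lemma bounded_linear_ad: "bounded_linear (ad v)"
proof -
  have "linear (ad v)"
    by (rule linearI)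
      (simp_all add: ad_def matrix_add_ldistrib matrix_add_rdistrib matrix_scalar_ac
        scalar_matrix_assoc)
  then show ?thesis
    by (simp add: linear_conv_bounded_linear)
qed

lemma bounded_linear_matrix_nth: "bounded_linear (\<lambda>M::'a::real_normed_vector^'n^'m. M $ p $ q)"
  using bounded_linear_compose[OF bounded_linear_vec_nth bounded_linear_vec_nth] .

lemma sum_sum_if_eq:
  fixes j k :: "'n::finite"
  shows "(\<Sum>a\<in>UNIV. \<Sum>b\<in>UNIV. if a = j \<and> b = k then f a b else 0) = f j k"
proof -
  have "(\<Sum>a\<in>UNIV. \<Sum>b\<in>UNIV. if a = j \<and> b = k then f a b else 0)
      = (\<Sum>a\<in>UNIV. \<Sum>b\<in>UNIV. if b = k then if a = j then f j k else 0 else 0)"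
    by (intro sum.cong) auto
  then show ?thesis
    by simp
qed

definition matrix_unit :: "'n::finite \<Rightarrow> 'n \<Rightarrow> 'a::{zero,one}^'n^'n" where
  "matrix_unit j k = (\<chi> p q. if p = j \<and> q = k then 1 else 0)"

lemma matrix_unit_nth: "matrix_unit j k $ p $ q = (if p = j \<and> q = k then 1 else 0)"
  by (simp add: matrix_unit_def)

lemma matrix_mult_unit_nth: "(A ** matrix_unit j k ** C) $ p $ q = A $ p $ j * C $ k $ q"
proof -
  have "(A ** matrix_unit j k ** C) $ p $ q
      = (\<Sum>r\<in>UNIV. \<Sum>s\<in>UNIV. if r = j \<and> s = k then A $ p $ r * C $ s $ q else 0)"
    unfolding matrix_mult_triple_nth matrix_unit_nth by (intro sum.cong refl) auto
  then show ?thesis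
    by (simp only: sum_sum_if_eq)
qed

subsection \<open>Choi coefficients and Kraus maps\<close>

text \<open>\<open>choi \<Phi> j k p q\<close> is the entry at \<open>((j,p),(k,q))\<close> of the Choi matrix
  \<open>\<Sum>\<^sub>j\<^sub>k E\<^sub>j\<^sub>k \<otimes> \<Phi>(E\<^sub>j\<^sub>k)\<close> of \<open>\<Phi>\<close>.\<close>

definition choi :: "(complex^'n^'n \<Rightarrow> complex^'n^'n) \<Rightarrow> 'n \<Rightarrow> 'n \<Rightarrow> 'n \<Rightarrow> 'n \<Rightarrow> complex" where
  "choi \<Phi> j k p q = \<Phi> (matrix_unit j k) $ p $ q"

definition kraus_map :: "('i \<Rightarrow> complex^'n^'n) \<Rightarrow> 'i set \<Rightarrow> complex^'n^'n \<Rightarrow> complex^'n^'n" where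
  "kraus_map a I x = (\<Sum>i\<in>I. a i ** x ** cadj (a i))"

lemma choi_kraus_map: "choi (kraus_map a I) j k p q = (\<Sum>i\<in>I. a i $ p $ j * cnj (a i $ q $ k))"
  by (simp add: choi_def kraus_map_def matrix_mult_unit_nth)

lemma kraus_map_choi_expansion:
  "kraus_map a I x $ p $ q = (\<Sum>j\<in>UNIV. \<Sum>k\<in>UNIV. x $ j $ k * choi (kraus_map a I) j k p q)"
proof -
  have "kraus_map a I x $ p $ q
      = (\<Sum>i\<in>I. \<Sum>j\<in>UNIV. \<Sum>k\<in>UNIV. x $ j $ k * (a i $ p $ j * cnj (a i $ q $ k)))"
    by (simp add: kraus_map_def matrix_mult_triple_nth mult_ac)
  also have "\<dots> = (\<Sum>j\<in>UNIV. \<Sum>i\<in>I. \<Sum>k\<in>UNIV. x $ j $ k * (a i $ p $ j * cnj (a i $ q $ k)))"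
    by (rule sum.swap)
  also have "\<dots> = (\<Sum>j\<in>UNIV. \<Sum>k\<in>UNIV. \<Sum>i\<in>I. x $ j $ k * (a i $ p $ j * cnj (a i $ q $ k)))"
    by (intro sum.cong refl sum.swap)
  finally show ?thesis
    by (simp add: choi_kraus_map sum_distrib_left)
qed

lemma choi_kraus_map_transpose:
  assumes "\<forall>i\<in>I. transpose (a i) = e *\<^sub>R a i"
  shows "choi (kraus_map a I) j k p q = of_real e * choi (kraus_map a I) p k j q"
proof -
  have "a i $ p $ j = of_real e * a i $ j $ p" if "i \<in> I" for i
  proof -
    have "a i $ p $ j = transpose (a i) $ j $ p"
      by simp
    also have "\<dots> = e *\<^sub>R a i $ j $ p"
      using assms that by simp
    also have "\<dots> = of_real e * a i $ j $ p"
      by (simp add: scaleR_conv_of_real)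
    finally show ?thesis .
  qed
  then show ?thesis
    by (simp add: choi_kraus_map sum_distrib_left mult.assoc)
qed

lemma ad_kraus_map:
  "ad u \<circ> kraus_map a I \<circ> ad (transpose u) = kraus_map (\<lambda>i. u ** a i ** transpose u) I"
  by (simp add: fun_eq_iff ad_def kraus_map_def matrix_mult_sum_left matrix_mult_sum_right
      cadj_mult matrix_mul_assoc)

subsection \<open>Choi coefficients of covariant maps\<close>

definition diag_mat :: "('n::finite \<Rightarrow> complex) \<Rightarrow> complex^'n^'n" where
  "diag_mat \<theta> = (\<chi> r s. if r = s then \<theta> r else 0)"

lemma diag_mat_mult_nth: "(diag_mat \<theta> ** X) $ r $ s = \<theta> r * X $ r $ s"
  by (simp add: matrix_mult_nth diag_mat_def if_distrib if_distribR cong: if_cong)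

lemma mult_diag_mat_nth: "(X ** diag_mat \<theta>) $ r $ s = X $ r $ s * \<theta> s"
  by (simp add: matrix_mult_nth diag_mat_def if_distrib if_distribR cong: if_cong)

lemma transpose_diag_mat: "transpose (diag_mat \<theta>) = diag_mat \<theta>"
  by (simp add: vec_eq_iff diag_mat_def)

lemma cadj_diag_mat: "cadj (diag_mat \<theta>) = diag_mat (\<lambda>r. cnj (\<theta> r))"
  by (simp add: vec_eq_iff diag_mat_def)

lemma ad_diag_mat_nth: "ad (diag_mat \<theta>) x $ r $ s = \<theta> r * x $ r $ s * cnj (\<theta> s)"
  by (simp add: ad_def cadj_diag_mat diag_mat_mult_nth mult_diag_mat_nth)

lemma unitary_diag_mat:
  assumes "\<And>r. \<theta> r * cnj (\<theta> r) = 1"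
  shows "unitary_mat (diag_mat \<theta>)"
proof -
  have "cnj (\<theta> r) * \<theta> r = 1" for r
    using assms[of r] by (simp add: mult.commute)
  with assms show ?thesis
    by (simp add: unitary_mat_def cadj_diag_mat vec_eq_iff diag_mat_mult_nth mat_nth)
      (simp add: diag_mat_def)
qed

definition inv_sqrt2 :: complex where
  "inv_sqrt2 = complex_of_real (1 / sqrt 2)"

lemma inv_sqrt2_squared: "inv_sqrt2 * inv_sqrt2 = 1 / 2"
  by (simp add: inv_sqrt2_def flip: of_real_mult)

lemma cnj_inv_sqrt2: "cnj inv_sqrt2 = inv_sqrt2"
  by (simp add: inv_sqrt2_def)

definition hadamard_mat :: "'n::finite \<Rightarrow> 'n \<Rightarrow> complex^'n^'n" where
  "hadamard_mat j k = (\<chi> r s.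
     if r = j then (if s = j then inv_sqrt2 else if s = k then inv_sqrt2 else 0)
     else if r = k then (if s = j then inv_sqrt2 else if s = k then - inv_sqrt2 else 0)
     else if r = s then 1 else 0)"

lemma hadamard_mat_nth:
  "hadamard_mat j k $ r $ s =
     (if r = j then (if s = j then inv_sqrt2 else if s = k then inv_sqrt2 else 0)
      else if r = k then (if s = j then inv_sqrt2 else if s = k then - inv_sqrt2 else 0)
      else if r = s then 1 else 0)"
  by (simp add: hadamard_mat_def)

lemma hadamard_mat_sym: "j \<noteq> k \<Longrightarrow> hadamard_mat j k $ r $ s = hadamard_mat j k $ s $ r"
  by (auto simp: hadamard_mat_nth)

lemma hadamard_mat_mult_sum:
  assumes "j \<noteq> k"
  shows "(\<Sum>t\<in>UNIV. hadamard_mat j k $ r $ t * f t) =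
    (if r = j then inv_sqrt2 * f j + inv_sqrt2 * f k
     else if r = k then inv_sqrt2 * f j - inv_sqrt2 * f k else f r)"
proof (cases "r = j \<or> r = k")
  case True
  then have "(\<Sum>t\<in>UNIV. hadamard_mat j k $ r $ t * f t) = (\<Sum>t\<in>{j, k}. hadamard_mat j k $ r $ t * f t)"
    by (intro sum.mono_neutral_right) (auto simp: hadamard_mat_nth)
  with True assms show ?thesis
    by (auto simp: hadamard_mat_nth)
next
  case False
  then have "(\<Sum>t\<in>UNIV. hadamard_mat j k $ r $ t * f t) = (\<Sum>t\<in>{r}. hadamard_mat j k $ r $ t * f t)"
    by (intro sum.mono_neutral_right) (auto simp: hadamard_mat_nth)
  with False show ?thesis
    by (simp add: hadamard_mat_nth)
qed

lemma transpose_hadamard_mat: "j \<noteq> k \<Longrightarrow> transpose (hadamard_mat j k) = hadamard_mat j k"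
  by (simp add: vec_eq_iff hadamard_mat_sym)

lemma cadj_hadamard_mat: "j \<noteq> k \<Longrightarrow> cadj (hadamard_mat j k) = hadamard_mat j k"
  by (simp add: vec_eq_iff hadamard_mat_sym) (simp add: hadamard_mat_nth cnj_inv_sqrt2)

lemma hadamard_mat_squared: "j \<noteq> k \<Longrightarrow> hadamard_mat j k ** hadamard_mat j k = mat 1"
  by (simp add: vec_eq_iff matrix_mult_nth hadamard_mat_mult_sum mat_nth)
    (auto simp: hadamard_mat_nth inv_sqrt2_squared)

lemma unitary_hadamard_mat: "j \<noteq> k \<Longrightarrow> unitary_mat (hadamard_mat j k)"
  by (simp add: unitary_mat_def cadj_hadamard_mat hadamard_mat_squared)

context
  fixes \<Phi> :: "complex^'n^'n \<Rightarrow> complex^'n^'n"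
  assumes choi_expansion: "\<And>x p q. \<Phi> x $ p $ q = (\<Sum>j\<in>UNIV. \<Sum>k\<in>UNIV. x $ j $ k * choi \<Phi> j k p q)"
    and covariant: "\<And>v x. unitary_mat v \<Longrightarrow> ad v (\<Phi> (ad (transpose v) x)) = \<Phi> x"
begin

lemma choi_phase_invariant:
  assumes "\<And>r. \<theta> r * cnj (\<theta> r) = 1"
  shows "choi \<Phi> j k p q = \<theta> p * \<theta> j * cnj (\<theta> k) * cnj (\<theta> q) * choi \<Phi> j k p q"
proof -
  let ?D = "diag_mat \<theta>"
  have "choi \<Phi> j k p q = ad ?D (\<Phi> (ad ?D (matrix_unit j k))) $ p $ q"
    using covariant[OF unitary_diag_mat[OF assms]] by (simp add: choi_def transpose_diag_mat)
  also have "\<dots> = \<theta> p * \<Phi> (ad ?D (matrix_unit j k)) $ p $ q * cnj (\<theta> q)"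
    by (rule ad_diag_mat_nth)
  also have "\<Phi> (ad ?D (matrix_unit j k)) $ p $ q
      = (\<Sum>a\<in>UNIV. \<Sum>b\<in>UNIV. if a = j \<and> b = k then \<theta> j * cnj (\<theta> k) * choi \<Phi> j k p q else 0)"
    unfolding choi_expansion ad_diag_mat_nth matrix_unit_nth by (intro sum.cong) auto
  finally show ?thesis
    by (simp add: sum_sum_if_eq mult_ac)
qed

text \<open>A phase \<open>\<i>\<close> placed at a single index \<open>m\<close> survives in the invariance relation unless
  the indices \<open>j, k, p, q\<close> pair up.\<close>

lemma choi_eq_0:
  assumes "\<not> ((p = q \<and> j = k) \<or> (p = k \<and> j = q))"
  shows "choi \<Phi> j k p q = 0"
proof (rule ccontr)
  assume nonzero: "choi \<Phi> j k p q \<noteq> 0"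
  define \<theta> where "\<theta> m r = (if r = m then \<i> else 1)" for m r :: 'n
  have "\<theta> m p * \<theta> m j * cnj (\<theta> m k) * cnj (\<theta> m q) = 1" for m
    using choi_phase_invariant[of "\<theta> m" j k p q] nonzero by (simp add: \<theta>_def)
  from this[of p] this[of q] this[of j] this[of k] assms show False
    by (auto simp: \<theta>_def split: if_splits)
qed

lemma choi_hadamard:
  assumes "j \<noteq> k"
  shows "(choi \<Phi> j j r s + choi \<Phi> j k r s + choi \<Phi> k j r s + choi \<Phi> k k r s) / 2
     = (\<Sum>a\<in>UNIV. hadamard_mat j k $ r $ a * (\<Sum>b\<in>UNIV. hadamard_mat j k $ s $ b * choi \<Phi> j j a b))"
proof -
  let ?H = "hadamard_mat j k"
  have H: "transpose ?H = ?H" "cadj ?H = ?H" "?H ** ?H = mat 1"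
    using assms by (simp_all add: transpose_hadamard_mat cadj_hadamard_mat hadamard_mat_squared)
  have "ad ?H (ad ?H (matrix_unit j j)) = matrix_unit j j"
    by (simp add: ad_def H matrix_mul_assoc) (simp flip: matrix_mul_assoc add: H)
  then have cov: "ad ?H (\<Phi> (matrix_unit j j)) = \<Phi> (ad ?H (matrix_unit j j))"
    using covariant[OF unitary_hadamard_mat[OF assms], of "ad ?H (matrix_unit j j)"] H by simp
  have "\<Phi> (ad ?H (matrix_unit j j)) $ r $ s
      = (\<Sum>a\<in>UNIV. ?H $ j $ a * (\<Sum>b\<in>UNIV. ?H $ j $ b * choi \<Phi> a b r s))"
    unfolding choi_expansion ad_def H matrix_mult_unit_nth
    by (simp add: hadamard_mat_sym[OF assms, of _ j] sum_distrib_left mult_ac)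
  also have "\<dots> = inv_sqrt2 * (inv_sqrt2 * choi \<Phi> j j r s + inv_sqrt2 * choi \<Phi> j k r s)
       + inv_sqrt2 * (inv_sqrt2 * choi \<Phi> k j r s + inv_sqrt2 * choi \<Phi> k k r s)"
    by (simp add: hadamard_mat_mult_sum assms)
  also have "\<dots> = (choi \<Phi> j j r s + choi \<Phi> j k r s + choi \<Phi> k j r s + choi \<Phi> k k r s) / 2"
    by (simp add: ring_distribs mult.assoc[symmetric] inv_sqrt2_squared add_divide_distrib)
  finally show ?thesis
    using cov[symmetric]
    by (simp add: ad_def H matrix_mult_triple_nth choi_def hadamard_mat_sym[OF assms, of _ s]
        sum_distrib_left mult_ac)
qed

lemma choi_offdiag_eq:
  "j \<noteq> k \<Longrightarrow> choi \<Phi> k j j k = choi \<Phi> j j j j - choi \<Phi> j j k k"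
  using choi_hadamard[of j k j k]
  by (simp add: hadamard_mat_mult_sum choi_eq_0)
    (simp add: ring_distribs mult.assoc[symmetric] inv_sqrt2_squared)

lemma choi_diag_swap:
  "j \<noteq> k \<Longrightarrow> choi \<Phi> k k j j = choi \<Phi> j j k k"
  using choi_hadamard[of j k j j]
  by (simp add: hadamard_mat_mult_sum choi_eq_0)
    (simp add: ring_distribs mult.assoc[symmetric] inv_sqrt2_squared)

lemma choi_diag_column:
  "j \<noteq> k \<Longrightarrow> p \<noteq> j \<Longrightarrow> p \<noteq> k \<Longrightarrow> choi \<Phi> k k p p = choi \<Phi> j j p p"
  using choi_hadamard[of j k p p] by (simp add: hadamard_mat_mult_sum choi_eq_0)

context
  fixes e :: real
  assumes unital: "\<Phi> (mat 1) = mat 1"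
    and choi_transpose: "\<And>j k p q. choi \<Phi> j k p q = of_real e * choi \<Phi> p k j q"
    and card_ge_2: "CARD('n) \<ge> 2"
begin

lemma choi_diag_sum: "(\<Sum>j\<in>UNIV. choi \<Phi> j j p p) = 1"
proof -
  have "1 = \<Phi> (mat 1) $ p $ p"
    by (simp add: unital mat_nth)
  also have "\<dots> = (\<Sum>j\<in>UNIV. \<Sum>k\<in>UNIV. if k = j then choi \<Phi> j k p p else 0)"
    unfolding choi_expansion by (intro sum.cong refl) (simp add: mat_nth)
  finally show ?thesis
    by simp
qed

lemma choi_diag_same_eq_distinct:
  assumes "j \<noteq> p"
  shows "choi \<Phi> p p p p = (1 + of_real e) * choi \<Phi> j j p p"
proof -
  have "choi \<Phi> p p p p = choi \<Phi> j p p j + choi \<Phi> p p j j"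
    using choi_offdiag_eq[of p j] assms by simp
  also have "choi \<Phi> j p p j = of_real e * choi \<Phi> p p j j"
    by (rule choi_transpose)
  also have "choi \<Phi> p p j j = choi \<Phi> j j p p"
    using choi_diag_swap[of p j] assms by simp
  finally show ?thesis
    by (simp add: distrib_right)
qed

lemma choi_diag_distinct:
  assumes "j \<noteq> p"
  shows "choi \<Phi> j j p p = 1 / (of_nat CARD('n) + of_real e)"
proof -
  have column: "choi \<Phi> i i p p = choi \<Phi> j j p p" if "i \<noteq> p" for i
    using choi_diag_column[of j i p] that assms by (cases "i = j") auto
  have "1 = (\<Sum>i\<in>UNIV. choi \<Phi> i i p p)"
    by (rule choi_diag_sum[symmetric])
  also have "\<dots> = choi \<Phi> p p p p + (\<Sum>i\<in>UNIV - {p}. choi \<Phi> i i p p)"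
    by (rule sum.remove) simp_all
  also have "(\<Sum>i\<in>UNIV - {p}. choi \<Phi> i i p p) = (\<Sum>i\<in>UNIV - {p}. choi \<Phi> j j p p)"
    by (intro sum.cong refl column) simp
  also have "\<dots> = of_nat (CARD('n) - 1) * choi \<Phi> j j p p"
    by (simp add: card_Diff_singleton)
  also have "choi \<Phi> p p p p = (1 + of_real e) * choi \<Phi> j j p p"
    by (rule choi_diag_same_eq_distinct[OF assms])
  finally have product: "(of_nat CARD('n) + of_real e) * choi \<Phi> j j p p = 1"
    using card_ge_2 by (simp add: of_nat_diff algebra_simps)
  then have "of_nat CARD('n) + complex_of_real e \<noteq> 0"
    by auto
  with product show ?thesis
    by (simp add: eq_divide_eq mult.commute)
qed

lemma choi_diag_same: "choi \<Phi> p p p p = (1 + of_real e) / (of_nat CARD('n) + of_real e)"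
proof -
  have "\<not> UNIV \<subseteq> {p}"
  proof
    assume "UNIV \<subseteq> {p}"
    then have "CARD('n) \<le> card {p}"
      by (intro card_mono) auto
    with card_ge_2 show False
      by simp
  qed
  then obtain j where "j \<noteq> p"
    by blast
  then show ?thesis
    by (simp add: choi_diag_same_eq_distinct[of j p] choi_diag_distinct[of j p])
qed

lemma choi_werner_holevo:
  "choi \<Phi> j k p q = ((if j = k \<and> p = q then 1 else 0) + of_real e * (if j = q \<and> k = p then 1 else 0))
      / (of_nat CARD('n) + of_real e)"
proof -
  consider "j = k \<and> p = q" | "p = k \<and> q = j \<and> j \<noteq> k" | "\<not> (p = q \<and> j = k) \<and> \<not> (p = k \<and> j = q)"
    by blast
  then show ?thesis
  proof cases
    case 1
    then have "k = j" "q = p"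
      by auto
    then show ?thesis
      by (cases "j = p") (simp_all add: choi_diag_same choi_diag_distinct)
  next
    case 2
    then have "k \<noteq> j"
      by auto
    with 2 show ?thesis
      using choi_transpose[of j k k j] choi_diag_distinct[of k j] by simp
  next
    case 3
    then have "choi \<Phi> j k p q = 0"
      by (intro choi_eq_0) auto
    moreover have "\<not> (j = k \<and> p = q)" "\<not> (j = q \<and> k = p)"
      using 3 by auto
    ultimately show ?thesis
      by (simp only: if_False) simp
  qed
qed

lemma werner_holevo_form:
  "\<Phi> x = (1 / (real CARD('n) + e)) *\<^sub>R (mat (mtrace x) + e *\<^sub>R transpose x)"
proof -
  let ?c = "1 / (of_nat CARD('n) + complex_of_real e)"
  have trace: "(\<Sum>j\<in>UNIV. \<Sum>k\<in>UNIV. if j = k \<and> P then x $ j $ k else 0) = (if P then mtrace x else 0)"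
    for P
    by (cases P) (simp_all add: mtrace_def)
  have if_scale: "y * (((if P then 1 else 0) + of_real e * (if Q then 1 else 0)) / N)
      = 1 / N * (if P then y else 0) + 1 / N * of_real e * (if Q then y else 0)" for y N :: complex
    and P Q
    by (cases P; cases Q) (simp_all add: algebra_simps add_divide_distrib)
  have "\<Phi> x $ p $ q = ?c * ((if p = q then mtrace x else 0) + of_real e * x $ q $ p)" for p q
  proof -
    have "\<Phi> x $ p $ q = (\<Sum>j\<in>UNIV. \<Sum>k\<in>UNIV.
        ?c * (if j = k \<and> p = q then x $ j $ k else 0) + ?c * of_real e * (if j = q \<and> k = p then x $ j $ k else 0))"
      by (simp only: choi_expansion choi_werner_holevo if_scale)
    also have "\<dots> = ?c * (\<Sum>j\<in>UNIV. \<Sum>k\<in>UNIV. if j = k \<and> p = q then x $ j $ k else 0)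
        + ?c * of_real e * (\<Sum>j\<in>UNIV. \<Sum>k\<in>UNIV. if j = q \<and> k = p then x $ j $ k else 0)"
      by (simp only: sum.distrib sum_distrib_left[symmetric])
    finally show ?thesis
      by (simp only: trace sum_sum_if_eq distrib_left mult.assoc)
  qed
  then show ?thesis
    by (simp add: vec_eq_iff mat_nth) (simp add: scaleR_conv_of_real)
qed

end

end

subsection \<open>Twirling\<close>

lemma continuous_on_matrix_mult [continuous_intros]:
  fixes f g :: "'a::topological_space \<Rightarrow> 'b::real_normed_algebra_1^'n^'n"
  assumes "continuous_on S f" "continuous_on S g"
  shows "continuous_on S (\<lambda>u. f u ** g u)"
  unfolding matrix_matrix_mult_def by (intro continuous_intros assms)

lemma continuous_on_transpose [continuous_intros]:
  fixes f :: "'a::topological_space \<Rightarrow> 'b::real_normed_vector^'n^'n"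
  assumes "continuous_on S f"
  shows "continuous_on S (\<lambda>u. transpose (f u))"
  unfolding transpose_def by (intro continuous_intros assms)

lemma continuous_on_cadj [continuous_intros]:
  fixes f :: "'a::topological_space \<Rightarrow> complex^'n^'n"
  assumes "continuous_on S f"
  shows "continuous_on S (\<lambda>u. cadj (f u))"
  unfolding cadj_def by (intro continuous_intros assms)

lemma continuous_on_kraus_map: "continuous_on UNIV (kraus_map a I)"
  unfolding kraus_map_def by (intro continuous_intros)

lemma unitary_nth_le_1:
  assumes "unitary_mat u"
  shows "norm (u $ p $ q) \<le> 1"
proof -
  have "(u ** cadj u) $ p $ p = 1"
    using assms by (simp add: unitary_mat_def mat_nth)
  then have "complex_of_real (\<Sum>k\<in>UNIV. (norm (u $ p $ k))\<^sup>2) = 1"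
    by (simp only: of_real_sum complex_norm_square matrix_mult_nth cadj_nth)
  then have row: "(\<Sum>k\<in>UNIV. (norm (u $ p $ k))\<^sup>2) = 1"
    using of_real_eq_1_iff by blast
  have "(norm (u $ p $ q))\<^sup>2 \<le> (\<Sum>k\<in>UNIV. (norm (u $ p $ k))\<^sup>2)"
    by (rule member_le_sum) auto
  with row show ?thesis
    by (simp add: power_le_one_iff)
qed

lemma compact_matrix_nth_le_1: "compact {u::complex^'n^'m. \<forall>p q. norm (u $ p $ q) \<le> 1}"
proof -
  let ?K = "{u::complex^'n^'m. \<forall>p q. norm (u $ p $ q) \<le> 1}"
  have norm_le_sum: "norm x \<le> (\<Sum>i\<in>UNIV. norm (x $ i))" for x :: "'a::real_normed_vector^'k"
    unfolding norm_vec_def by (rule L2_set_le_sum) auto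
  have "norm u \<le> real CARD('m) * real CARD('n)" if "u \<in> ?K" for u
  proof -
    have "norm u \<le> (\<Sum>p\<in>UNIV. \<Sum>q\<in>UNIV. norm (u $ p $ q))"
      by (rule order_trans[OF norm_le_sum sum_mono[OF norm_le_sum]])
    also have "\<dots> \<le> (\<Sum>p\<in>(UNIV::'m set). \<Sum>q\<in>(UNIV::'n set). 1)"
      using that by (intro sum_mono) auto
    finally show ?thesis
      by simp
  qed
  then have "bounded ?K"
    unfolding bounded_iff by blast
  moreover have "closed ?K"
    by (intro closed_Collect_all closed_Collect_le continuous_intros)
  ultimately show ?thesis
    by (simp add: compact_eq_bounded_closed)
qed

context
  fixes \<mu> :: "(complex^'n^'n) measure"
  assumes haar: "haar_unitary \<mu>"
begin

lemma haar_measurable_continuous: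
  assumes "continuous_on UNIV h"
  shows "h \<in> borel_measurable \<mu>"
proof -
  have "sets \<mu> = sets borel"
    using haar by (simp add: haar_unitary_def)
  then show ?thesis
    using borel_measurable_continuous_onI[OF assms] measurable_cong_sets by blast
qed

lemma haar_integrable_continuous:
  fixes h :: "complex^'n^'n \<Rightarrow> 'b::{banach,second_countable_topology}"
  assumes h: "continuous_on UNIV h"
  shows "integrable \<mu> h"
proof -
  let ?K = "{u::complex^'n^'n. \<forall>p q. norm (u $ p $ q) \<le> 1}"
  have "bounded (h ` ?K)"
    by (intro compact_imp_bounded compact_continuous_image compact_matrix_nth_le_1
        continuous_on_subset[OF h]) auto
  then obtain B where B: "\<And>u. u \<in> ?K \<Longrightarrow> norm (h u) \<le> B"
    unfolding bounded_iff by blast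
  have "AE u in \<mu>. unitary_mat u"
    using haar by (simp add: haar_unitary_def)
  then have "AE u in \<mu>. norm (h u) \<le> B"
    by eventually_elim (simp add: B unitary_nth_le_1)
  moreover have "finite_measure \<mu>"
    using haar by (simp add: haar_unitary_def prob_space.finite_measure)
  ultimately show ?thesis
    using finite_measure.integrable_const_bound haar_measurable_continuous[OF h] by blast
qed

lemma continuous_on_twirl_integrand:
  assumes "continuous_on UNIV T"
  shows "continuous_on UNIV (\<lambda>u. (ad u \<circ> T \<circ> ad (transpose u)) x)"
  unfolding comp_def ad_def
  by (intro continuous_intros continuous_on_compose2[OF assms]) auto

lemma integrable_twirl_integrand:
  assumes "continuous_on UNIV T"
  shows "integrable \<mu> (\<lambda>u. (ad u \<circ> T \<circ> ad (transpose u)) x)"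
  by (rule haar_integrable_continuous[OF continuous_on_twirl_integrand[OF assms]])

lemma twirl_nth:
  assumes "continuous_on UNIV T"
  shows "twirl \<mu> T x $ p $ q = (\<integral>u. (ad u \<circ> T \<circ> ad (transpose u)) x $ p $ q \<partial>\<mu>)"
  unfolding twirl_def
  by (rule integral_bounded_linear[OF bounded_linear_matrix_nth integrable_twirl_integrand[OF assms],
        symmetric])

lemma twirl_covariant:
  assumes T: "continuous_on UNIV T" and v: "unitary_mat v"
  shows "ad v (twirl \<mu> T (ad (transpose v) x)) = twirl \<mu> T x"
proof -
  let ?f = "\<lambda>y u. (ad u \<circ> T \<circ> ad (transpose u)) y"
  have shift: "ad v (?f (ad (transpose v) x) u) = ?f x (v ** u)" for u
    by (simp add: ad_mult matrix_transpose_mul)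
  have "(\<lambda>u. v ** u) \<in> borel_measurable \<mu>"
    by (intro haar_measurable_continuous continuous_intros)
  moreover have "?f x \<in> borel_measurable borel"
    by (rule borel_measurable_continuous_onI[OF continuous_on_twirl_integrand[OF T]])
  ultimately have distr: "integral\<^sup>L (distr \<mu> borel (\<lambda>u. v ** u)) (?f x) = (\<integral>u. ?f x (v ** u) \<partial>\<mu>)"
    by (rule integral_distr)
  have "ad v (twirl \<mu> T (ad (transpose v) x)) = (\<integral>u. ad v (?f (ad (transpose v) x) u) \<partial>\<mu>)"
    unfolding twirl_def
    by (rule integral_bounded_linear[OF bounded_linear_ad integrable_twirl_integrand[OF T], symmetric])
  also have "\<dots> = (\<integral>u. ?f x (v ** u) \<partial>\<mu>)"
    by (simp only: shift)
  also have "\<dots> = twirl \<mu> T x"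
    using haar v distr by (simp add: haar_unitary_def twirl_def)
  finally show ?thesis .
qed

lemma twirl_unital:
  assumes T: "continuous_on UNIV T" and unital: "T (mat 1) = mat 1"
  shows "twirl \<mu> T (mat 1) = mat 1"
proof -
  have "AE u in \<mu>. unitary_mat u"
    using haar by (simp add: haar_unitary_def)
  then have "AE u in \<mu>. (ad u \<circ> T \<circ> ad (transpose u)) (mat 1) = mat 1"
  proof eventually_elim
    case (elim u)
    have "ad (transpose u) (mat 1) = transpose (cadj u ** u)"
      by (simp add: ad_def cadj_transpose matrix_transpose_mul)
    with elim show ?case
      by (simp add: unital unitary_mat_def ad_def)
  qed
  then have "twirl \<mu> T (mat 1) = (\<integral>u. mat 1 \<partial>\<mu>)"
    unfolding twirl_def
    by (intro integral_cong_AE haar_measurable_continuous continuous_on_twirl_integrand[OF T])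
      simp_all
  also have "\<dots> = mat 1"
    using haar by (simp add: haar_unitary_def prob_space.prob_space)
  finally show ?thesis .
qed

lemma twirl_kraus_map_nth:
  "twirl \<mu> (kraus_map a I) x $ p $ q
     = (\<integral>u. kraus_map (\<lambda>i. u ** a i ** transpose u) I x $ p $ q \<partial>\<mu>)"
  by (simp only: twirl_nth[OF continuous_on_kraus_map] ad_kraus_map)

lemma integrable_choi_kraus_map:
  "integrable \<mu> (\<lambda>u. c * choi (kraus_map (\<lambda>i. u ** a i ** transpose u) I) j k p q)"
  unfolding choi_kraus_map
  by (intro haar_integrable_continuous continuous_intros)

lemma twirl_kraus_map_choi_expansion:
  "twirl \<mu> (kraus_map a I) x $ p $ q
     = (\<Sum>j\<in>UNIV. \<Sum>k\<in>UNIV. x $ j $ k * choi (twirl \<mu> (kraus_map a I)) j k p q)"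
proof -
  let ?K = "\<lambda>u. kraus_map (\<lambda>i. u ** a i ** transpose u) I"
  have "twirl \<mu> (kraus_map a I) x $ p $ q
      = (\<integral>u. (\<Sum>j\<in>UNIV. \<Sum>k\<in>UNIV. x $ j $ k * choi (?K u) j k p q) \<partial>\<mu>)"
    by (simp only: twirl_kraus_map_nth kraus_map_choi_expansion)
  also have "\<dots> = (\<Sum>j\<in>UNIV. \<Sum>k\<in>UNIV. x $ j $ k * (\<integral>u. choi (?K u) j k p q \<partial>\<mu>))"
    by (simp add: integrable_choi_kraus_map integrable_sum)
  finally show ?thesis
    by (simp add: choi_def twirl_kraus_map_nth)
qed

lemma choi_twirl_kraus_map_transpose:
  assumes "\<forall>i\<in>I. transpose (a i) = e *\<^sub>R a i"
  shows "choi (twirl \<mu> (kraus_map a I)) j k p q = of_real e * choi (twirl \<mu> (kraus_map a I)) p k j q"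
proof -
  let ?K = "\<lambda>u. kraus_map (\<lambda>i. u ** a i ** transpose u) I"
  have sym: "\<forall>i\<in>I. transpose (u ** a i ** transpose u) = e *\<^sub>R (u ** a i ** transpose u)" for u
    using assms by (simp add: matrix_transpose_mul matrix_mul_assoc matrix_scalar_ac scalar_matrix_assoc)
  have "choi (twirl \<mu> (kraus_map a I)) j k p q = (\<integral>u. choi (?K u) j k p q \<partial>\<mu>)"
    by (simp add: choi_def twirl_kraus_map_nth)
  also have "\<dots> = (\<integral>u. of_real e * choi (?K u) p k j q \<partial>\<mu>)"
    by (rule Bochner_Integration.integral_cong[OF refl choi_kraus_map_transpose[OF sym]])
  also have "\<dots> = of_real e * (\<integral>u. choi (?K u) p k j q \<partial>\<mu>)"
    by (rule integral_mult_right_zero)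
  also have "\<dots> = of_real e * choi (twirl \<mu> (kraus_map a I)) p k j q"
    by (simp add: choi_def twirl_kraus_map_nth)
  finally show ?thesis .
qed

lemma twirl_kraus_map_werner_holevo:
  assumes unital: "kraus_map a I (mat 1) = mat 1"
    and transpose_eq: "\<forall>i\<in>I. transpose (a i) = e *\<^sub>R a i"
    and card: "CARD('n) \<ge> 2"
  shows "twirl \<mu> (kraus_map a I) x
      = (1 / (real CARD('n) + e)) *\<^sub>R (mat (mtrace x) + e *\<^sub>R transpose x)"
  by (rule werner_holevo_form[OF twirl_kraus_map_choi_expansion
        twirl_covariant[OF continuous_on_kraus_map] twirl_unital[OF continuous_on_kraus_map unital]
        choi_twirl_kraus_map_transpose[OF transpose_eq] card])

end

theorem corollary4p6:
  fixes T :: "complex^'n^'n \<Rightarrow> complex^'n^'n"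
    and a :: "nat \<Rightarrow> complex^'n^'n"
    and d :: nat
    and \<mu> :: "(complex^'n^'n) measure"
  assumes "CARD('n) \<ge> 2"
    and "haar_unitary \<mu>"
    and "\<And>x. T x = (\<Sum>i\<in>{1..d}. a i ** x ** cadj (a i))"
    and "T (mat 1) = mat 1"
  shows "((\<forall>i\<in>{1..d}. transpose (a i) = a i) \<longrightarrow> twirl \<mu> T = W_plus)
       \<and> ((\<forall>i\<in>{1..d}. transpose (a i) = - a i) \<longrightarrow> twirl \<mu> T = W_minus)"
proof -
  have T: "T = kraus_map a {1..d}"
    using assms(3) by (simp add: fun_eq_iff kraus_map_def)
  have werner_holevo:
    "twirl \<mu> T x = (1 / (real CARD('n) + e)) *\<^sub>R (mat (mtrace x) + e *\<^sub>R transpose x)"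
    if "\<forall>i\<in>{1..d}. transpose (a i) = e *\<^sub>R a i" for e x
    using twirl_kraus_map_werner_holevo[OF assms(2) _ that assms(1)] assms(4) T by simp
  show ?thesis
  proof (intro conjI impI)
    assume "\<forall>i\<in>{1..d}. transpose (a i) = a i"
    then show "twirl \<mu> T = W_plus"
      using werner_holevo[of 1] by (simp add: fun_eq_iff W_plus_def)
  next
    assume "\<forall>i\<in>{1..d}. transpose (a i) = - a i"
    then show "twirl \<mu> T = W_minus"
      using werner_holevo[of "-1"] by (simp add: fun_eq_iff W_minus_def)
  qed
qed

end
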